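(* (Metatheory of CPL natural deduction.) Fix a set $W$ of worlds with a converse well-founded accessibility relation $\prec$. For all contexts $\Gamma,\Gamma'$, worlds $w$, and propositions $A, C$: (i) (Hypothesis) If $A[w] \in \Gamma$, then $\Gamma \vdash_{\mathbf{CPL}} A[w]$. (ii) (Generalized weakening) If $\Gamma \subseteq_w \Gamma'$ and $\Gamma \vdash_{\mathbf{CPL}} A[w]$, then $\Gamma' \vdash_{\mathbf{CPL}} A[w]$. (iii) (Substitution) If $\Gamma \vdash_{\mathbf{CPL}} A[w]$ and $\Gamma, A[w] \vdash_{\mathbf{CPL}} C[w]$, then $\Gamma \vdash_{\mathbf{CPL}} C[w]$.
   Context: Fix a set $W$ of worlds and a binary accessibility relation $\prec$ on $W$ that is converse well-founded: there is no infinite chain $w_0 \prec w_1 \prec w_2 \prec \cdots$ (in particular $\prec$ is irreflexive and has no cycles). $\prec^*$ denotes the reflexive–transitive closure and $\prec^+$ the transitive closure of $\prec$. Propositions are generated by $A,B,C ::= Q \mid \bot \mid A \supset B \mid \Diamond A \mid \Box A$, where $Q$ ranges over atomic propositions. A context $\Gamma$ is a finite collection of judgments $A[w]$ with $A$ a proposition and $w \in W$; $\Gamma, A[w]$ denotes the context extended by $A[w]$. For contexts $\Gamma,\Gamma'$ and a world $w$, $\Gamma \subseteq_w \Gamma'$ holds iff (a) for all $w'$ with $w \prec^* w'$, $A[w'] \in \Gamma$ implies $A[w'] \in \Gamma'$, and (b) for all $w'$ with $w \prec^+ w'$, $A[w'] \in \Gamma'$ implies $A[w'] \in \Gamma$.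 The judgment $\Gamma \vdash_{\mathbf{CPL}} A[w]$ (natural deduction for tethered constructive provability logic) is defined one world at a time: provability at $w$ is defined after provability at all $w'$ with $w \prec^+ w'$ (well-defined by converse well-foundedness), and at each world it is the least relation closed under the rules below, whose premises may be meta-level universal quantifications and implications: (hyp) $\Gamma, A[w] \vdash A[w]$. ($\bot E$) If $\Gamma \vdash \bot[w]$ then $\Gamma \vdash C[w]$. ($\supset I$) If $\Gamma, A[w] \vdash B[w]$ then $\Gamma \vdash A \supset B[w]$. ($\supset E$) If $\Gamma \vdash A \supset B[w]$ and $\Gamma \vdash A[w]$ then $\Gamma \vdash B[w]$. ($\Diamond I$) If $w \prec w'$ and $\Gamma \vdash A[w']$ then $\Gamma \vdash \Diamond A[w]$. ($\Box I$) If for every $w'$ with $w \prec w'$ we have $\Gamma \vdash A[w']$, then $\Gamma \vdash \Box A[w]$. ($\Diamond E$) If $\Gamma \vdash \Diamond A[w]$ and for every $w'$ with $w \prec w'$, $\Gamma \vdash A[w']$ implies $\Gamma \vdash C[w]$, then $\Gamma \vdash C[w]$. ($\Box E$) If $\Gamma \vdash \Box A[w]$ and ($\Gamma \vdash A[w']$ for all $w'$ with $w \prec w'$) implies $\Gamma \vdash C[w]$, then $\Gamma \vdash C[w]$. *)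

theory Defs
  imports Main
begin

datatype 'a fm = Atom 'a | Bot | Imp "'a fm" "'a fm" | Dia "'a fm" | Box "'a fm"

text \<open>A context is a (finite) collection of judgments A[w], represented as a set of pairs.
  The extension \<Gamma>, A[w] is insert (A,w) \<Gamma>.\<close>
type_synonym ('a,'w) ctx = "('a fm \<times> 'w) set"

text \<open>Rules at a single world w, relative to provability U at other worlds
  (U w' \<Gamma> A means \<Gamma> \<turnstile> A[w']); only used for w' with w \<prec> w'.\<close>
inductive cpl_at :: "('w \<Rightarrow> 'w \<Rightarrow> bool) \<Rightarrow> ('w \<Rightarrow> ('a,'w) ctx \<Rightarrow> 'a fm \<Rightarrow> bool) \<Rightarrow> 'w
    \<Rightarrow> ('a,'w) ctx \<Rightarrow> 'a fm \<Rightarrow> bool"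
  for R :: "'w \<Rightarrow> 'w \<Rightarrow> bool" and U and w where
  hyp: "cpl_at R U w (insert (A, w) \<Gamma>) A"
| botE: "cpl_at R U w \<Gamma> Bot \<Longrightarrow> cpl_at R U w \<Gamma> C"
| impI: "cpl_at R U w (insert (A, w) \<Gamma>) B \<Longrightarrow> cpl_at R U w \<Gamma> (Imp A B)"
| impE: "cpl_at R U w \<Gamma> (Imp A B) \<Longrightarrow> cpl_at R U w \<Gamma> A \<Longrightarrow> cpl_at R U w \<Gamma> B"
| diaI: "R w w' \<Longrightarrow> U w' \<Gamma> A \<Longrightarrow> cpl_at R U w \<Gamma> (Dia A)"
| boxI: "(\<forall>w'. R w w' \<longrightarrow> U w' \<Gamma> A) \<Longrightarrow> cpl_at R U w \<Gamma> (Box A)"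
| diaE: "cpl_at R U w \<Gamma> (Dia A) \<Longrightarrow>
         (\<forall>w'. R w w' \<longrightarrow> U w' \<Gamma> A \<longrightarrow> cpl_at R U w \<Gamma> C) \<Longrightarrow> cpl_at R U w \<Gamma> C"
| boxE: "cpl_at R U w \<Gamma> (Box A) \<Longrightarrow>
         ((\<forall>w'. R w w' \<longrightarrow> U w' \<Gamma> A) \<longrightarrow> cpl_at R U w \<Gamma> C) \<Longrightarrow> cpl_at R U w \<Gamma> C"

text \<open>Provability defined world by world, by well-founded recursion along the converse of R
  (meaningful when R is converse well-founded).\<close>
definition cpl :: "('w \<Rightarrow> 'w \<Rightarrow> bool) \<Rightarrow> ('a,'w) ctx \<Rightarrow> 'a fm \<Rightarrow> 'w \<Rightarrow> bool" where
  "cpl R \<Gamma> A w = wfrec {(x, y). R y x} (\<lambda>f v. cpl_at R f v) w \<Gamma> A"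

definition ctx_sub :: "('w \<Rightarrow> 'w \<Rightarrow> bool) \<Rightarrow> 'w \<Rightarrow> ('a,'w) ctx \<Rightarrow> ('a,'w) ctx \<Rightarrow> bool" where
  "ctx_sub R w \<Gamma> \<Gamma>' \<longleftrightarrow>
     (\<forall>w' A. R\<^sup>*\<^sup>* w w' \<longrightarrow> (A, w') \<in> \<Gamma> \<longrightarrow> (A, w') \<in> \<Gamma>') \<and>
     (\<forall>w' A. R\<^sup>+\<^sup>+ w w' \<longrightarrow> (A, w') \<in> \<Gamma>' \<longrightarrow> (A, w') \<in> \<Gamma>)"

end

theory Submission
  imports Defs
begin

text \<open>Weakening and substitution are proved one world at a time, by well-founded induction along
  the converse of \<open>\<prec>\<close>. At a fixed world \<open>w\<close> both are rule inductions on \<open>cpl_at\<close>, in which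
  provability at the successors of \<open>w\<close> enters only as a parameter \<open>U\<close>. Weakening needs \<open>U\<close> to be
  closed under \<open>\<subseteq>\<^sub>w\<^sub>'\<close> for every successor \<open>w'\<close> (the induction hypothesis), because the modal
  rules move to the successors, where \<open>\<Gamma> \<subseteq>\<^sub>w \<Gamma>'\<close> gives agreement in both directions. Substitution
  needs only weakening: the cut formula \<open>A[w]\<close> is invisible at the successors, as no
  successor of \<open>w\<close> reaches \<open>w\<close> again.\<close>

lemma cpl_at_cong:
  assumes "cpl_at R U w \<Gamma> A" and "\<forall>v. R w v \<longrightarrow> U v = U' v"
  shows "cpl_at R U' w \<Gamma> A"
  using assms
  by (induction rule: cpl_at.induct) (auto intro: cpl_at.intros)

lemma cpl_unfold:
  assumes wf: "wf {(x, y). R y x}"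
  shows "cpl R \<Gamma> A w = cpl_at R (\<lambda>v \<Gamma> A. cpl R \<Gamma> A v) w \<Gamma> A"
proof -
  let ?r = "{(x, y). R y x}"
  let ?U = "cut (wfrec ?r (cpl_at R)) ?r w"
  have unfold: "cpl R \<Gamma> A w = cpl_at R ?U w \<Gamma> A"
    unfolding cpl_def by (subst wfrec[OF wf]) simp
  have "\<forall>v. R w v \<longrightarrow> ?U v = (\<lambda>\<Gamma> A. cpl R \<Gamma> A v)"
    by (auto simp: cut_apply cpl_def)
  moreover have "\<forall>v. R w v \<longrightarrow> (\<lambda>\<Gamma> A. cpl R \<Gamma> A v) = ?U v"
    by (auto simp: cut_apply cpl_def)
  ultimately show ?thesis
    unfolding unfold by (blast intro: cpl_at_cong)
qed

lemma wf_converse_not_tranclp_refl: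
  assumes "wf {(x, y). R y x}"
  shows "\<not> R\<^sup>+\<^sup>+ w w"
proof
  assume "R\<^sup>+\<^sup>+ w w"
  have "(b, a) \<in> {(x, y). R y x}\<^sup>+" if "R\<^sup>+\<^sup>+ a b" for a b
    using that by (induction rule: tranclp_induct) (auto intro: trancl_into_trancl2)
  then have "(w, w) \<in> {(x, y). R y x}\<^sup>+"
    using \<open>R\<^sup>+\<^sup>+ w w\<close> .
  then show False
    using wf_acyclic[OF assms] by (simp add: acyclic_def)
qed

lemma ctx_sub_succ:
  assumes "ctx_sub R w \<Gamma> \<Gamma>'" and "R w w'"
  shows "ctx_sub R w' \<Gamma> \<Gamma>'" and "ctx_sub R w' \<Gamma>' \<Gamma>"
  using assms unfolding ctx_sub_def
  by (meson converse_rtranclp_into_rtranclp tranclp_into_tranclp2 tranclp_into_rtranclp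
        rtranclp_into_tranclp2)+

lemma ctx_sub_insert: "ctx_sub R w \<Gamma> \<Gamma>' \<Longrightarrow> ctx_sub R w (insert x \<Gamma>) (insert x \<Gamma>')"
  unfolding ctx_sub_def by auto

lemma ctx_sub_insert_left: "\<not> R\<^sup>*\<^sup>* v w \<Longrightarrow> ctx_sub R v (insert (A, w) \<Gamma>) \<Gamma>"
  unfolding ctx_sub_def by (blast dest: tranclp_into_rtranclp)

lemma ctx_sub_insert_right: "\<not> R\<^sup>+\<^sup>+ v w \<Longrightarrow> ctx_sub R v \<Gamma> (insert (A, w) \<Gamma>)"
  unfolding ctx_sub_def by blast

lemma cpl_at_weaken:
  assumes "cpl_at R U w \<Gamma> A" and "ctx_sub R w \<Gamma> \<Gamma>'"
    and U_weaken: "\<And>w' \<Delta> \<Delta>' B. R w w' \<Longrightarrow> ctx_sub R w' \<Delta> \<Delta>' \<Longrightarrow> U w' \<Delta> B \<Longrightarrow> U w' \<Delta>' B"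
  shows "cpl_at R U w \<Gamma>' A"
  using assms(1,2)
proof (induction arbitrary: \<Gamma>' rule: cpl_at.induct)
  case (hyp A \<Gamma>)
  then have "insert (A, w) \<Gamma>' = \<Gamma>'"
    unfolding ctx_sub_def by blast
  then show ?case
    by (metis cpl_at.hyp)
next
  case (botE \<Gamma> C)
  then show ?case
    by (simp add: cpl_at.botE)
next
  case (impI A \<Gamma> B)
  then show ?case
    by (simp add: cpl_at.impI ctx_sub_insert)
next
  case (impE \<Gamma> A B)
  then show ?case
    by (meson cpl_at.impE)
next
  case (diaI w' \<Gamma> A)
  have "U w' \<Gamma>' A"
    using U_weaken[OF diaI.hyps(1) ctx_sub_succ(1)[OF diaI.prems diaI.hyps(1)] diaI.hyps(2)] .
  then show ?case
    by (rule cpl_at.diaI[where R = R and U = U, OF diaI.hyps(1)])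
next
  case (boxI \<Gamma> A)
  have "U w' \<Gamma>' A" if "R w w'" for w'
    using U_weaken[OF that ctx_sub_succ(1)[OF boxI.prems that]] boxI.hyps that by simp
  then show ?case
    by (simp add: cpl_at.boxI)
next
  case (diaE \<Gamma> A C)
  show ?case
  proof (rule cpl_at.diaE[OF diaE.IH(1)[OF diaE.prems]], intro allI HOL.impI)
    fix w' assume succ: "R w w'" and "U w' \<Gamma>' A"
    then have "U w' \<Gamma> A"
      using U_weaken ctx_sub_succ(2)[OF diaE.prems succ] by blast
    then show "cpl_at R U w \<Gamma>' C"
      using diaE.IH(2) diaE.prems succ by blast
  qed
next
  case (boxE \<Gamma> A C)
  show ?case
  proof (rule cpl_at.boxE[OF boxE.IH(1)[OF boxE.prems]], intro HOL.impI)
    assume all_U: "\<forall>w'. R w w' \<longrightarrow> U w' \<Gamma>' A"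
    have "U w' \<Gamma> A" if succ: "R w w'" for w'
      using U_weaken[OF succ ctx_sub_succ(2)[OF boxE.prems succ]] all_U succ by blast
    then show "cpl_at R U w \<Gamma>' C"
      using boxE.IH(2) boxE.prems by blast
  qed
qed

lemma cpl_weaken:
  fixes \<Gamma> \<Gamma>' :: "('a, 'w) ctx"
  assumes wf: "wf {(x, y). R y x}"
    and "ctx_sub R w \<Gamma> \<Gamma>'" and "cpl R \<Gamma> A w"
  shows "cpl R \<Gamma>' A w"
  using wf assms(2,3)
proof (induction w arbitrary: \<Gamma> \<Gamma>' A rule: wf_induct_rule)
  case (less w)
  have "cpl_at R (\<lambda>v \<Gamma> A. cpl R \<Gamma> A v) w \<Gamma>' A"
  proof (rule cpl_at_weaken)
    show "cpl_at R (\<lambda>v \<Gamma> A. cpl R \<Gamma> A v) w \<Gamma> A"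
      using less.prems(2) cpl_unfold[OF wf] by blast
  next
    fix w' and \<Delta> \<Delta>' :: "('a, 'w) ctx" and B
    assume "R w w'" "ctx_sub R w' \<Delta> \<Delta>'" "cpl R \<Delta> B w'"
    then show "cpl R \<Delta>' B w'"
      using less.IH[of w' \<Delta> \<Delta>' B] by simp
  qed (fact less.prems(1))
  then show ?case
    using cpl_unfold[OF wf] by blast
qed

lemma cpl_at_subst:
  assumes "cpl_at R U w (insert (A, w) \<Gamma>) C" and "cpl_at R U w \<Gamma> A"
    and U_weaken: "\<And>w' \<Delta> \<Delta>' B. R w w' \<Longrightarrow> ctx_sub R w' \<Delta> \<Delta>' \<Longrightarrow> U w' \<Delta> B \<Longrightarrow> U w' \<Delta>' B"
    and acyclic: "\<not> R\<^sup>+\<^sup>+ w w"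
  shows "cpl_at R U w \<Gamma> C"
proof -
  have unreachable: "\<not> R\<^sup>*\<^sup>* w' w" "\<not> R\<^sup>+\<^sup>+ w' w" if "R w w'" for w'
    using acyclic that by (meson rtranclp_into_tranclp2 tranclp_into_rtranclp)+
  have "cpl_at R U w \<Delta> C \<Longrightarrow> \<Delta> = insert (A, w) \<Gamma> \<Longrightarrow> cpl_at R U w \<Gamma> A \<Longrightarrow> cpl_at R U w \<Gamma> C"
    for \<Delta> \<Gamma> A C
  proof (induction arbitrary: \<Gamma> A rule: cpl_at.induct)
    case (hyp B \<Delta>)
    show ?case
    proof (cases "B = A")
      case True
      then show ?thesis
        using hyp.prems(2) by simp
    next
      case False
      then have "insert (B, w) \<Gamma> = \<Gamma>"
        using hyp.prems(1) by blast
      then show ?thesis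
        by (metis cpl_at.hyp)
    qed
  next
    case (botE \<Delta> D)
    then show ?case
      by (blast intro: cpl_at.botE)
  next
    case (impI B \<Delta> D)
    have "cpl_at R U w (insert (B, w) \<Gamma>) A"
      using impI.prems(2) ctx_sub_insert_right[OF acyclic] U_weaken by (rule cpl_at_weaken)
    moreover have "insert (B, w) \<Delta> = insert (A, w) (insert (B, w) \<Gamma>)"
      using impI.prems(1) by blast
    ultimately show ?case
      using impI.IH by (blast intro: cpl_at.impI)
  next
    case (impE \<Delta> B D)
    then show ?case
      by (blast intro: cpl_at.impE)
  next
    case (diaI w' \<Delta> B)
    have "U w' \<Gamma> B"
      using U_weaken[OF diaI.hyps(1) _ diaI.hyps(2)] diaI.prems(1)
        ctx_sub_insert_left[OF unreachable(1)[OF diaI.hyps(1)]] by blast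
    then show ?case
      by (rule cpl_at.diaI[where R = R and U = U, OF diaI.hyps(1)])
  next
    case (boxI \<Delta> B)
    have "U w' \<Gamma> B" if succ: "R w w'" for w'
      using U_weaken[OF succ] boxI.hyps succ boxI.prems(1)
        ctx_sub_insert_left[OF unreachable(1)[OF succ]] by blast
    then show ?case
      by (simp add: cpl_at.boxI)
  next
    case (diaE \<Delta> B D)
    show ?case
    proof (rule cpl_at.diaE[OF diaE.IH(1)[OF diaE.prems]], intro allI HOL.impI)
      fix w' assume succ: "R w w'" and "U w' \<Gamma> B"
      then have "U w' \<Delta> B"
        using U_weaken[OF succ] diaE.prems(1)
          ctx_sub_insert_right[OF unreachable(2)[OF succ]] by blast
      then show "cpl_at R U w \<Gamma> D"
        using diaE.IH(2) diaE.prems succ by blast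
    qed
  next
    case (boxE \<Delta> B D)
    show ?case
    proof (rule cpl_at.boxE[OF boxE.IH(1)[OF boxE.prems]], intro HOL.impI)
      assume all_U: "\<forall>w'. R w w' \<longrightarrow> U w' \<Gamma> B"
      have "U w' \<Delta> B" if succ: "R w w'" for w'
        using U_weaken[OF succ] all_U succ boxE.prems(1)
          ctx_sub_insert_right[OF unreachable(2)[OF succ]] by blast
      then show "cpl_at R U w \<Gamma> D"
        using boxE.IH(2) boxE.prems by blast
    qed
  qed
  with assms(1,2) show ?thesis
    by blast
qed

lemma cpl_subst:
  assumes wf: "wf {(x, y). R y x}"
    and "cpl R \<Gamma> A w" and "cpl R (insert (A, w) \<Gamma>) C w"
  shows "cpl R \<Gamma> C w"
proof (rule cpl_unfold[OF wf, THEN iffD2], rule cpl_at_subst)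
  show "cpl_at R (\<lambda>v \<Gamma> A. cpl R \<Gamma> A v) w (insert (A, w) \<Gamma>) C"
    using assms(3) by (rule cpl_unfold[OF wf, THEN iffD1])
  show "cpl_at R (\<lambda>v \<Gamma> A. cpl R \<Gamma> A v) w \<Gamma> A"
    using assms(2) by (rule cpl_unfold[OF wf, THEN iffD1])
  show "cpl R \<Delta>' B w'" if "R w w'" "ctx_sub R w' \<Delta> \<Delta>'" "cpl R \<Delta> B w'" for w' \<Delta> \<Delta>' B
    using wf that(2,3) by (rule cpl_weaken)
  show "\<not> R\<^sup>+\<^sup>+ w w"
    using wf by (rule wf_converse_not_tranclp_refl)
qed

lemma cpl_hyp:
  assumes wf: "wf {(x, y). R y x}" and "(A, w) \<in> \<Gamma>"
  shows "cpl R \<Gamma> A w"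
proof (rule cpl_unfold[OF wf, THEN iffD2])
  show "cpl_at R (\<lambda>v \<Gamma> A. cpl R \<Gamma> A v) w \<Gamma> A"
    using cpl_at.hyp[of R _ w A \<Gamma>] unfolding insert_absorb[OF assms(2)] .
qed

theorem theorem1:
  fixes R :: "'w \<Rightarrow> 'w \<Rightarrow> bool"
  assumes "wf {(x, y). R y x}"
  shows "(\<forall>(\<Gamma> :: ('a,'w) ctx) A w. finite \<Gamma> \<longrightarrow> (A, w) \<in> \<Gamma> \<longrightarrow> cpl R \<Gamma> A w)
       \<and> (\<forall>(\<Gamma> :: ('a,'w) ctx) \<Gamma>' A w. finite \<Gamma> \<longrightarrow> finite \<Gamma>' \<longrightarrow> ctx_sub R w \<Gamma> \<Gamma>' \<longrightarrow>
              cpl R \<Gamma> A w \<longrightarrow> cpl R \<Gamma>' A w)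
       \<and> (\<forall>(\<Gamma> :: ('a,'w) ctx) A C w. finite \<Gamma> \<longrightarrow> cpl R \<Gamma> A w \<longrightarrow>
              cpl R (insert (A, w) \<Gamma>) C w \<longrightarrow> cpl R \<Gamma> C w)"
proof (intro conjI allI HOL.impI)
  show "cpl R \<Gamma> A w" if "finite \<Gamma>" and "(A, w) \<in> \<Gamma>" for \<Gamma> :: "('a,'w) ctx" and A w
    using assms that(2) by (rule cpl_hyp)
  show "cpl R \<Gamma>' A w"
    if "finite \<Gamma>" and "finite \<Gamma>'" and "ctx_sub R w \<Gamma> \<Gamma>'" and "cpl R \<Gamma> A w"
    for \<Gamma> \<Gamma>' :: "('a,'w) ctx" and A w
    using assms that(3,4) by (rule cpl_weaken)
  show "cpl R \<Gamma> C w" if "finite \<Gamma>" and "cpl R \<Gamma> A w" and "cpl R (insert (A, w) \<Gamma>) C w"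
    for \<Gamma> :: "('a,'w) ctx" and A C w
    using assms that(2,3) by (rule cpl_subst)
qed

end
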